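(* Let $\mathcal{P}=\{P_1,\ldots,P_n\}$, let $\mathcal{Q}\subseteq 2^{\mathcal{P}}$ and let $\mathcal{F}\subseteq 2^{\mathcal{P}}$ be a fail-prone system. Consider the ideal $I=\langle \xi_{\mathcal{Q}_{\bar X}},\ \xi_{\mathcal{Q}_{\bar Y}},\ \sigma\rangle\subseteq \mathbb{B}(\bar X,\bar Y)$ and let $\mathcal{G}$ be a Gröbner basis for $I$. If $|SM(\mathcal{G})|=|\mathcal{Q}|^2$, then $\mathcal{Q}$ fulfills (classical) consistency, i.e. $Q_1\cap Q_2\neq\emptyset$ for all $Q_1,Q_2\in\mathcal{Q}$.
   Context: $\mathbb{B}=\mathbb{F}_2$ and $\mathbb{B}(X_1,\ldots,X_n,Y_1,\ldots,Y_n)=\mathbb{B}[\bar X,\bar Y]/\langle X_i^2-X_i, Y_i^2-Y_i\ (1\le i\le n)\rangle$ is the Boolean polynomial ring; $\bar X=\{X_1,\ldots,X_n\}$, $\bar Y=\{Y_1,\ldots,Y_n\}$. The map $\varphi:2^{\mathcal{P}}\to\mathbb{B}^n$ sends $S$ to its indicator vector ($\varphi(S)_i=1$ iff $P_i\in S$); $\varphi(\mathcal{A})=\{\varphi(A):A\in\mathcal{A}\}$. For $S\subseteq\mathcal{P}$ the characteristic polynomial is $\xi_S(Z_1,\ldots,Z_n)=\prod_{i=1}^n(1+Z_i+\varphi(S)_i)$, and for $\mathcal{A}\subseteq 2^{\mathcal{P}}$ and a block of variables $\bar Z$, $\xi_{\mathcal{A}_{\bar Z}}=\prod_{A\in\mathcal{A}}(\xi_A(\bar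 Z)+1)$. $\sigma(\bar X,\bar Y)=\prod_{i=1}^n(X_iY_i+1)$. A fail-prone system is a collection of subsets of $\mathcal{P}$ none of which is contained in another. Monomials are ordered by the lexicographic order with $\bar Y<\bar X$ as blocks and $X_n\prec\cdots\prec X_1$, $Y_n\prec\cdots\prec Y_1$ within blocks. $LM(f)$ is the largest monomial of $f$. A Gröbner basis of $I$ is a generating set $\mathcal{G}$ of $I$ such that for every nonzero $f\in I$ some $g\in\mathcal{G}$ has $LM(g)\mid LM(f)$. $SM(\mathcal{G})$, the set of standard monomials, is the set of multilinear monomials (each variable with exponent $0$ or $1$) not lying in the ideal generated by $\{LM(f):f\in I\}$. *)

theory Defs
  imports Main
begin

text \<open>Boolean polynomial ring B(X_1..X_n,Y_1..Y_n) = F_2[X,Y]/<X_i^2-X_i, Y_i^2-Y_i>.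
  Every element has a unique multilinear representative, which we represent as the
  (finite) set of its monomials; a multilinear monomial is the set of variables
  occurring in it. Participants are P_1..P_n, identified with the indices 1..n.\<close>

datatype var = X nat | Y nat

type_synonym monom = "var set"
type_synonym bpoly = "var set set"

definition Vars :: "nat \<Rightarrow> var set" where
  "Vars n = X ` {1..n} \<union> Y ` {1..n}"

definition BPolys :: "nat \<Rightarrow> bpoly set" where
  "BPolys n = Pow (Pow (Vars n))"

definition pzero :: bpoly where "pzero = {}"
definition pone :: bpoly where "pone = {{}}"
definition pvar :: "var \<Rightarrow> bpoly" where "pvar v = {{v}}"

text \<open>Addition in characteristic 2: symmetric difference of monomial sets.\<close>
definition padd :: "bpoly \<Rightarrow> bpoly \<Rightarrow> bpoly" where
  "padd p q = (p - q) \<union> (q - p)"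

text \<open>Multiplication: monomials multiply by union (since Z^2 = Z), coefficients mod 2.\<close>
definition pmul :: "bpoly \<Rightarrow> bpoly \<Rightarrow> bpoly" where
  "pmul p q = (if finite p \<and> finite q
     then {m. odd (card {(a, b). a \<in> p \<and> b \<in> q \<and> a \<union> b = m})} else {})"

text \<open>Finite product of Boolean polynomials (pmul is commutative and associative).\<close>
definition bprod :: "('i \<Rightarrow> bpoly) \<Rightarrow> 'i set \<Rightarrow> bpoly" where
  "bprod f A = Finite_Set.fold (\<lambda>i acc. pmul (f i) acc) pone A"

definition phi :: "nat set \<Rightarrow> nat \<Rightarrow> bpoly" where
  "phi S i = (if i \<in> S then pone else pzero)"

definition xi :: "nat \<Rightarrow> nat set \<Rightarrow> (nat \<Rightarrow> var) \<Rightarrow> bpoly" where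
  "xi n S Z = bprod (\<lambda>i. padd (padd pone (pvar (Z i))) (phi S i)) {1..n}"

definition xi_sys :: "nat \<Rightarrow> nat set set \<Rightarrow> (nat \<Rightarrow> var) \<Rightarrow> bpoly" where
  "xi_sys n \<A> Z = bprod (\<lambda>A. padd (xi n A Z) pone) \<A>"

definition sigma :: "nat \<Rightarrow> bpoly" where
  "sigma n = bprod (\<lambda>i. padd (pmul (pvar (X i)) (pvar (Y i))) pone) {1..n}"

inductive_set bideal :: "nat \<Rightarrow> bpoly set \<Rightarrow> bpoly set" for n G where
  gen: "g \<in> G \<Longrightarrow> g \<in> bideal n G"
| zero: "pzero \<in> bideal n G"
| add: "p \<in> bideal n G \<Longrightarrow> q \<in> bideal n G \<Longrightarrow> padd p q \<in> bideal n G"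
| mul: "r \<in> BPolys n \<Longrightarrow> p \<in> bideal n G \<Longrightarrow> pmul r p \<in> bideal n G"

text \<open>Lexicographic monomial order: variables ranked X_1 > ... > X_n > Y_1 > ... > Y_n
  (smaller rank = larger variable).\<close>
fun rank :: "nat \<Rightarrow> var \<Rightarrow> nat" where
  "rank n (X i) = i"
| "rank n (Y i) = n + i"

definition mono_less :: "nat \<Rightarrow> monom \<Rightarrow> monom \<Rightarrow> bool" where
  "mono_less n a b \<longleftrightarrow> (\<exists>v \<in> b - a. \<forall>w \<in> (a - b) \<union> (b - a). rank n v \<le> rank n w)"

text \<open>Leading monomial (for nonzero f).\<close>
definition LM :: "nat \<Rightarrow> bpoly \<Rightarrow> monom" where
  "LM n f = (THE m. m \<in> f \<and> (\<forall>m' \<in> f. m' \<noteq> m \<longrightarrow> mono_less n m' m))"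

definition is_groebner_basis :: "nat \<Rightarrow> bpoly set \<Rightarrow> bpoly set \<Rightarrow> bool" where
  "is_groebner_basis n G I \<longleftrightarrow> G \<subseteq> I \<and> bideal n G = I \<and>
     (\<forall>f \<in> I. f \<noteq> pzero \<longrightarrow> (\<exists>g \<in> G. g \<noteq> pzero \<and> LM n g \<subseteq> LM n f))"

definition SM :: "nat \<Rightarrow> bpoly set \<Rightarrow> monom set" where
  "SM n I = {m. m \<subseteq> Vars n \<and> {m} \<notin> bideal n {{LM n f} | f. f \<in> I \<and> f \<noteq> pzero}}"

definition fail_prone :: "nat \<Rightarrow> nat set set \<Rightarrow> bool" where
  "fail_prone n F \<longleftrightarrow> F \<subseteq> Pow {1..n} \<and> (\<forall>A \<in> F. \<forall>B \<in> F. A \<subseteq> B \<longrightarrow> A = B)"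

end

theory Submission
  imports Defs
begin

(* Evaluation at the points of B^(2n) identifies the Boolean ring B(X,Y) with the ring of all
   B-valued functions on B^(2n).  Consequently an ideal contains every polynomial vanishing on its
   zero set V (Boolean Nullstellensatz), and since a nonzero sum of standard monomials never lies in
   the ideal, distinct such sums define distinct functions on V; thus 2^|SM| <= 2^|V|.
   For the ideal of the theorem, xi_Q(X) vanishes exactly at the indicator vectors of quorums and
   sigma vanishes exactly where some X_i Y_i = 1, so V consists of the pairs (phi(Q1), phi(Q2)) with
   Q1, Q2 in Q and Q1 \<inter> Q2 nonempty.  If |SM| = |Q|^2, all pairs must intersect. *)

section \<open>Evaluation at 0/1-points\<close>

(* The value of p at the 0/1-point whose coordinates equal 1 exactly at the variables in a;
   True encodes 1. *)
definition peval :: "bpoly \<Rightarrow> var set \<Rightarrow> bool" where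
  "peval p a \<longleftrightarrow> odd (card {m \<in> p. m \<subseteq> a})"

lemma finite_Vars: "finite (Vars n)"
  by (simp add: Vars_def)

lemma finite_pone [simp]: "finite pone"
  and finite_pzero [simp]: "finite pzero"
  and finite_pvar [simp]: "finite (pvar v)"
  by (simp_all add: pone_def pzero_def pvar_def)

lemma finite_padd [simp]: "finite p \<Longrightarrow> finite q \<Longrightarrow> finite (padd p q)"
  by (simp add: padd_def)

lemma odd_card_sym_diff:
  assumes "finite A" "finite B"
  shows "odd (card (sym_diff A B)) \<longleftrightarrow> odd (card A) \<noteq> odd (card B)"
proof -
  have "sym_diff A B = (A \<union> B) - (A \<inter> B)" "A \<inter> B \<subseteq> A \<union> B" by blast+
  then have "card (sym_diff A B) + 2 * card (A \<inter> B) = card A + card B"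
    using assms card_Un_Int[OF assms] card_Diff_subset[of "A \<inter> B" "A \<union> B"]
      card_mono[of "A \<union> B" "A \<inter> B"] by auto
  then show ?thesis by presburger
qed

lemma peval_pone: "peval pone a"
proof -
  have "{m \<in> pone. m \<subseteq> a} = {{}}" by (auto simp: pone_def)
  then show ?thesis by (simp add: peval_def)
qed

lemma peval_pzero: "\<not> peval pzero a"
  by (simp add: peval_def pzero_def)

lemma peval_pvar: "peval (pvar v) a \<longleftrightarrow> v \<in> a"
proof -
  have "{m \<in> pvar v. m \<subseteq> a} = (if v \<in> a then {{v}} else {})" by (auto simp: pvar_def)
  then show ?thesis by (simp add: peval_def)
qed

lemma peval_padd:
  assumes "finite p" "finite q"
  shows "peval (padd p q) a \<longleftrightarrow> peval p a \<noteq> peval q a"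
proof -
  have "{m \<in> padd p q. m \<subseteq> a} = sym_diff {m \<in> p. m \<subseteq> a} {m \<in> q. m \<subseteq> a}"
    by (auto simp: padd_def)
  then show ?thesis
    unfolding peval_def using assms by (simp add: odd_card_sym_diff)
qed

lemma pmul_subset_unions: "pmul p q \<subseteq> (\<lambda>(x, y). x \<union> y) ` (p \<times> q)"
proof
  fix m assume "m \<in> pmul p q"
  then have "odd (card {(a, b). a \<in> p \<and> b \<in> q \<and> a \<union> b = m})"
    by (simp add: pmul_def split: if_splits)
  then have "{(a, b). a \<in> p \<and> b \<in> q \<and> a \<union> b = m} \<noteq> {}" by (intro notI) simp
  then show "m \<in> (\<lambda>(x, y). x \<union> y) ` (p \<times> q)" by auto
qed

lemma finite_pmul [simp]: "finite p \<Longrightarrow> finite q \<Longrightarrow> finite (pmul p q)"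
  by (rule finite_subset[OF pmul_subset_unions]) auto

lemma peval_pmul:
  assumes "finite p" "finite q"
  shows "peval (pmul p q) a \<longleftrightarrow> peval p a \<and> peval q a"
proof -
  let ?pa = "{x \<in> p. x \<subseteq> a}" and ?qa = "{y \<in> q. y \<subseteq> a}"
  define c where "c m = card {(x, y). x \<in> p \<and> y \<in> q \<and> x \<union> y = m}" for m
  define U where "U = (\<lambda>(x, y). x \<union> y) ` (?pa \<times> ?qa)"
  have fin_U: "finite U" unfolding U_def using assms by auto
  \<comment> \<open>Grouping the pairs of monomials of p and q below a by their product m.\<close>
  have "card (?pa \<times> ?qa) = (\<Sum>m\<in>U. card {z \<in> ?pa \<times> ?qa. (\<lambda>(x, y). x \<union> y) z = m})"
    unfolding U_def using sum.image_gen[of "?pa \<times> ?qa" "\<lambda>_. 1::nat" "\<lambda>(x, y). x \<union> y"] assms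
    by simp
  also have "\<dots> = (\<Sum>m\<in>U. c m)"
  proof (rule sum.cong[OF refl])
    fix m assume "m \<in> U"
    then have "m \<subseteq> a" unfolding U_def by auto
    then have "{z \<in> ?pa \<times> ?qa. (\<lambda>(x, y). x \<union> y) z = m}
        = {(x, y). x \<in> p \<and> y \<in> q \<and> x \<union> y = m}"
      by auto
    then show "card {z \<in> ?pa \<times> ?qa. (\<lambda>(x, y). x \<union> y) z = m} = c m" by (simp add: c_def)
  qed
  finally have card_pairs: "card ?pa * card ?qa = (\<Sum>m\<in>U. c m)"
    by (simp add: card_cartesian_product)
  have "{m \<in> pmul p q. m \<subseteq> a} = {m \<in> U. odd (c m)}"
  proof (intro set_eqI iffI)
    fix m assume m: "m \<in> {m \<in> pmul p q. m \<subseteq> a}"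
    then have "m \<in> (\<lambda>(x, y). x \<union> y) ` (p \<times> q)" using pmul_subset_unions by blast
    with m have "m \<in> U" unfolding U_def by auto
    with m assms show "m \<in> {m \<in> U. odd (c m)}" by (simp add: pmul_def c_def)
  next
    fix m assume "m \<in> {m \<in> U. odd (c m)}"
    then show "m \<in> {m \<in> pmul p q. m \<subseteq> a}"
      using assms unfolding U_def by (auto simp: pmul_def c_def)
  qed
  then have "peval (pmul p q) a \<longleftrightarrow> odd (\<Sum>m\<in>U. c m)"
    unfolding peval_def using even_sum_iff[OF fin_U, of c] by simp
  also have "\<dots> \<longleftrightarrow> peval p a \<and> peval q a"
    unfolding card_pairs[symmetric] peval_def by simp
  finally show ?thesis .
qed

lemma poly_eqI_peval:
  assumes "p \<subseteq> Pow W" "q \<subseteq> Pow W" "finite p" "finite q"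
    and "\<And>b. b \<subseteq> W \<Longrightarrow> peval p b \<longleftrightarrow> peval q b"
  shows "p = q"
proof (rule ccontr)
  assume "p \<noteq> q"
  then have "padd p q \<noteq> {}" by (auto simp: padd_def)
  moreover have "finite (padd p q)" using assms by simp
  ultimately obtain m where m: "m \<in> padd p q" "\<forall>b\<in>padd p q. b \<subseteq> m \<longrightarrow> b = m"
    using finite_has_minimal by metis
  \<comment> \<open>A minimal monomial m of p + q is the only one below m, so p + q takes the value 1 at m.\<close>
  then have "{b \<in> padd p q. b \<subseteq> m} = {m}" by auto
  then have "peval (padd p q) m" by (simp add: peval_def)
  moreover have "m \<subseteq> W" using m(1) assms(1,2) by (auto simp: padd_def)
  ultimately show False using peval_padd[OF assms(3,4)] assms(5) by simp
qed

lemma pmul_subset_Pow: "p \<subseteq> Pow W \<Longrightarrow> q \<subseteq> Pow W \<Longrightarrow> pmul p q \<subseteq> Pow W"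
  using pmul_subset_unions by fastforce

lemma pmul_left_commute:
  assumes "finite p" "finite q"
  shows "pmul p (pmul q r) = pmul q (pmul p r)"
proof (cases "finite r")
  case True
  let ?W = "\<Union>p \<union> \<Union>q \<union> \<Union>r"
  have "p \<subseteq> Pow ?W" "q \<subseteq> Pow ?W" "r \<subseteq> Pow ?W" by auto
  then have "pmul p (pmul q r) \<subseteq> Pow ?W" "pmul q (pmul p r) \<subseteq> Pow ?W"
    by (simp_all add: pmul_subset_Pow)
  then show ?thesis
    by (rule poly_eqI_peval) (use assms True in \<open>auto simp: peval_pmul\<close>)
next
  case False
  then show ?thesis by (simp add: pmul_def)
qed

lemma finite_BPolys: "p \<in> BPolys n \<Longrightarrow> finite p"
  unfolding BPolys_def using finite_Vars by (auto intro: finite_subset)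

lemma pone_BPolys: "pone \<in> BPolys n"
  by (simp add: pone_def BPolys_def)

lemma pzero_BPolys: "pzero \<in> BPolys n"
  by (simp add: pzero_def BPolys_def)

lemma pvar_BPolys: "v \<in> Vars n \<Longrightarrow> pvar v \<in> BPolys n"
  by (simp add: pvar_def BPolys_def)

lemma padd_BPolys: "p \<in> BPolys n \<Longrightarrow> q \<in> BPolys n \<Longrightarrow> padd p q \<in> BPolys n"
  by (auto simp: padd_def BPolys_def)

lemma pmul_BPolys: "p \<in> BPolys n \<Longrightarrow> q \<in> BPolys n \<Longrightarrow> pmul p q \<in> BPolys n"
  by (simp add: BPolys_def pmul_subset_Pow)

lemma finite_phi [simp]: "finite (phi S i)"
  by (simp add: phi_def)

lemma peval_phi: "peval (phi S i) a \<longleftrightarrow> i \<in> S"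
  by (simp add: phi_def peval_pone peval_pzero)

lemma phi_BPolys: "phi S i \<in> BPolys n"
  by (simp add: phi_def pone_BPolys pzero_BPolys)

lemma bprod_insert:
  assumes "finite A" "x \<notin> A" "\<forall>i\<in>insert x A. finite (f i)"
  shows "bprod f (insert x A) = pmul (f x) (bprod f A)"
proof -
  interpret comp_fun_commute_on "insert x A" "\<lambda>i acc. pmul (f i) acc"
  proof unfold_locales
    fix i j assume "i \<in> insert x A" "j \<in> insert x A"
    with assms(3) have "finite (f i)" "finite (f j)" by blast+
    then show "pmul (f j) \<circ> pmul (f i) = pmul (f i) \<circ> pmul (f j)"
      by (simp add: fun_eq_iff pmul_left_commute)
  qed
  show ?thesis
    unfolding bprod_def by (rule fold_insert[OF subset_refl assms(1,2)])
qed

lemma finite_bprod: "finite A \<Longrightarrow> \<forall>i\<in>A. finite (f i) \<Longrightarrow> finite (bprod f A)"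
proof (induction A rule: finite_induct)
  case empty
  show ?case by (simp add: bprod_def)
next
  case (insert x A)
  then show ?case by (simp add: bprod_insert)
qed

lemma peval_bprod:
  assumes "finite A" "\<forall>i\<in>A. finite (f i)"
  shows "peval (bprod f A) a \<longleftrightarrow> (\<forall>i\<in>A. peval (f i) a)"
  using assms
proof (induction A rule: finite_induct)
  case empty
  show ?case by (simp add: bprod_def peval_pone)
next
  case (insert x A)
  then show ?case by (simp add: bprod_insert peval_pmul finite_bprod)
qed

lemma bprod_BPolys: "finite A \<Longrightarrow> \<forall>i\<in>A. f i \<in> BPolys n \<Longrightarrow> bprod f A \<in> BPolys n"
proof (induction A rule: finite_induct)
  case empty
  show ?case by (simp add: bprod_def pone_BPolys)
next
  case (insert x A)
  then have "\<forall>i\<in>insert x A. finite (f i)" by (auto intro: finite_BPolys)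
  with insert show ?case by (simp add: bprod_insert pmul_BPolys)
qed

lemma finite_xi [simp]: "finite (xi n S Z)"
  by (simp add: xi_def finite_bprod)

lemma peval_xi: "peval (xi n S Z) a \<longleftrightarrow> (\<forall>i\<in>{1..n}. Z i \<in> a \<longleftrightarrow> i \<in> S)"
  by (simp add: xi_def peval_bprod peval_padd peval_pone peval_pvar peval_phi)

lemma xi_BPolys: "Z ` {1..n} \<subseteq> Vars n \<Longrightarrow> xi n S Z \<in> BPolys n"
  unfolding xi_def
  by (rule bprod_BPolys) (auto intro!: padd_BPolys pone_BPolys phi_BPolys pvar_BPolys)

lemma peval_xi_sys:
  assumes "finite \<A>"
  shows "peval (xi_sys n \<A> Z) a \<longleftrightarrow> (\<forall>A\<in>\<A>. \<not> (\<forall>i\<in>{1..n}. Z i \<in> a \<longleftrightarrow> i \<in> A))"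
  using assms by (simp add: xi_sys_def peval_bprod peval_padd peval_pone peval_xi)

lemma xi_sys_BPolys: "finite \<A> \<Longrightarrow> Z ` {1..n} \<subseteq> Vars n \<Longrightarrow> xi_sys n \<A> Z \<in> BPolys n"
  unfolding xi_sys_def by (auto intro!: bprod_BPolys padd_BPolys xi_BPolys pone_BPolys)

lemma peval_sigma: "peval (sigma n) a \<longleftrightarrow> (\<forall>i\<in>{1..n}. \<not> (X i \<in> a \<and> Y i \<in> a))"
  by (simp add: sigma_def peval_bprod peval_padd peval_pmul peval_pone peval_pvar)

lemma sigma_BPolys: "sigma n \<in> BPolys n"
  unfolding sigma_def
  by (rule bprod_BPolys) (auto simp: Vars_def intro!: padd_BPolys pmul_BPolys pvar_BPolys pone_BPolys)

lemma inj_on_rank_Vars: "inj_on (rank n) (Vars n)"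
  by (auto simp: Vars_def inj_on_def)

lemma mono_less_asym:
  assumes "a \<subseteq> Vars n" "b \<subseteq> Vars n" "mono_less n a b"
  shows "\<not> mono_less n b a"
proof
  assume "mono_less n b a"
  then obtain u where u: "u \<in> a - b" "\<forall>w \<in> sym_diff b a. rank n u \<le> rank n w"
    unfolding mono_less_def by blast
  obtain v where v: "v \<in> b - a" "\<forall>w \<in> sym_diff a b. rank n v \<le> rank n w"
    using assms(3) unfolding mono_less_def by blast
  have "rank n u = rank n v" using u v by force
  with u v assms(1,2) have "u = v" using inj_on_rank_Vars[of n] by (auto dest: inj_onD)
  with u v show False by blast
qed

lemma mono_less_total:
  assumes "a \<subseteq> Vars n" "b \<subseteq> Vars n" "a \<noteq> b"
  shows "mono_less n a b \<or> mono_less n b a"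
proof -
  have fin: "finite (rank n ` sym_diff a b)" and ne: "rank n ` sym_diff a b \<noteq> {}"
    using assms finite_Vars finite_subset by blast+
  then have "Min (rank n ` sym_diff a b) \<in> rank n ` sym_diff a b" by (rule Min_in)
  then obtain v where v: "v \<in> sym_diff a b" "Min (rank n ` sym_diff a b) = rank n v" by blast
  have min: "rank n v \<le> rank n w" if "w \<in> sym_diff a b" for w
    using Min_le[OF fin imageI[OF that]] v(2) by simp
  show ?thesis
  proof (cases "v \<in> b")
    case True
    with v(1) min have "mono_less n a b" unfolding mono_less_def by blast
    then show ?thesis ..
  next
    case False
    with v(1) min have "v \<in> a - b" "\<forall>w \<in> sym_diff b a. rank n v \<le> rank n w" by blast+
    then have "mono_less n b a" unfolding mono_less_def by blast
    then show ?thesis ..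
  qed
qed

lemma mono_less_trans:
  assumes "a \<subseteq> Vars n" "b \<subseteq> Vars n" "c \<subseteq> Vars n" "mono_less n a b" "mono_less n b c"
  shows "mono_less n a c"
proof -
  obtain v where v: "v \<in> b - a" "\<forall>w \<in> sym_diff a b. rank n v \<le> rank n w"
    using assms(4) unfolding mono_less_def by blast
  obtain u where u: "u \<in> c - b" "\<forall>w \<in> sym_diff b c. rank n u \<le> rank n w"
    using assms(5) unfolding mono_less_def by blast
  have "u \<noteq> v" using u(1) v(1) by blast
  with u(1) v(1) assms(2,3) have "rank n u \<noteq> rank n v"
    using inj_on_rank_Vars[of n] by (auto dest: inj_onD)
  \<comment> \<open>The witness of smaller rank also witnesses mono_less n a c.\<close>
  define t where "t = (if rank n v < rank n u then v else u)"
  have t_le: "rank n t \<le> rank n v" "rank n t \<le> rank n u"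
    using \<open>rank n u \<noteq> rank n v\<close> by (auto simp: t_def)
  have t_min: "rank n t \<le> rank n w" if "w \<in> sym_diff a c" for w
  proof -
    from that consider "w \<in> sym_diff a b" | "w \<in> sym_diff b c" by blast
    then show ?thesis
    proof cases
      case 1
      with v(2) t_le(1) show ?thesis by (blast intro: order_trans)
    next
      case 2
      with u(2) t_le(2) show ?thesis by (blast intro: order_trans)
    qed
  qed
  have "t \<in> c - a"
  proof (cases "rank n v < rank n u")
    case True
    with u(2) have "v \<notin> sym_diff b c" by (blast dest: leD)
    with True v(1) show ?thesis by (auto simp: t_def)
  next
    case False
    with \<open>rank n u \<noteq> rank n v\<close> have "rank n u < rank n v" by simp
    with v(2) have "u \<notin> sym_diff a b" by (blast dest: leD)
    with False u(1) show ?thesis by (auto simp: t_def)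
  qed
  with t_min show ?thesis unfolding mono_less_def by blast
qed

lemma ex_mono_greatest:
  assumes "finite p" "p \<noteq> {}" "p \<subseteq> Pow (Vars n)"
  shows "\<exists>m\<in>p. \<forall>m'\<in>p. m' \<noteq> m \<longrightarrow> mono_less n m' m"
  using assms
proof (induction p rule: finite_ne_induct)
  case (singleton x)
  then show ?case by simp
next
  case (insert x F)
  then obtain m where m: "m \<in> F" "\<forall>m'\<in>F. m' \<noteq> m \<longrightarrow> mono_less n m' m" by auto
  have "x \<noteq> m" using m insert.hyps by auto
  have sub: "x \<subseteq> Vars n" "m \<subseteq> Vars n" "F \<subseteq> Pow (Vars n)" using insert.prems m by auto
  show ?case
  proof (cases "mono_less n x m")
    case True
    then show ?thesis using m by auto
  next
    case False
    then have "mono_less n m x" using mono_less_total[OF sub(1,2) \<open>x \<noteq> m\<close>] by simp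
    have "mono_less n m' x" if "m' \<in> F" for m'
    proof (cases "m' = m")
      case True
      with \<open>mono_less n m x\<close> show ?thesis by simp
    next
      case False
      with m that have "mono_less n m' m" by blast
      moreover have "m' \<subseteq> Vars n" using sub(3) that by blast
      ultimately show ?thesis
        using mono_less_trans[OF _ sub(2,1)] \<open>mono_less n m x\<close> by blast
    qed
    then show ?thesis using insert.hyps by auto
  qed
qed

lemma LM_mem:
  assumes "finite p" "p \<noteq> {}" "p \<subseteq> Pow (Vars n)"
  shows "LM n p \<in> p"
proof -
  obtain m where m: "m \<in> p" "\<forall>m'\<in>p. m' \<noteq> m \<longrightarrow> mono_less n m' m"
    using ex_mono_greatest[OF assms] by blast
  have "\<exists>!m. m \<in> p \<and> (\<forall>m' \<in> p. m' \<noteq> m \<longrightarrow> mono_less n m' m)"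
  proof (rule ex1I[of _ m])
    show "m \<in> p \<and> (\<forall>m' \<in> p. m' \<noteq> m \<longrightarrow> mono_less n m' m)" using m by blast
  next
    fix k assume k: "k \<in> p \<and> (\<forall>m' \<in> p. m' \<noteq> k \<longrightarrow> mono_less n m' k)"
    have sub: "k \<subseteq> Vars n" "m \<subseteq> Vars n" using assms(3) k m(1) by auto
    show "k = m"
    proof (rule ccontr)
      assume "k \<noteq> m"
      with k m have "mono_less n k m" "mono_less n m k" by blast+
      with mono_less_asym[OF sub] show False by blast
    qed
  qed
  then show ?thesis unfolding LM_def by (rule theI'[THEN conjunct1])
qed

section \<open>The Boolean Nullstellensatz\<close>

lemma bideal_subset_BPolys:
  assumes "G \<subseteq> BPolys n"
  shows "bideal n G \<subseteq> BPolys n"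
proof
  fix p assume "p \<in> bideal n G"
  then show "p \<in> BPolys n"
    by induction (use assms in \<open>auto intro: pzero_BPolys padd_BPolys pmul_BPolys\<close>)
qed

(* The expansion of prod_{v in a} v * prod_{v in Vars n - a} (1 + v). *)
definition pindicator :: "nat \<Rightarrow> var set \<Rightarrow> bpoly" where
  "pindicator n a = {m. a \<subseteq> m \<and> m \<subseteq> Vars n}"

lemma pindicator_BPolys: "pindicator n a \<in> BPolys n"
  by (auto simp: pindicator_def BPolys_def)

lemma peval_pindicator:
  assumes "b \<subseteq> Vars n"
  shows "peval (pindicator n a) b \<longleftrightarrow> a = b"
proof (cases "a \<subseteq> b")
  case True
  have "{m \<in> pindicator n a. m \<subseteq> b} = (\<lambda>s. a \<union> s) ` Pow (b - a)"
  proof (intro set_eqI iffI)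
    fix m assume "m \<in> {m \<in> pindicator n a. m \<subseteq> b}"
    then have "a \<subseteq> m" "m \<subseteq> b" by (auto simp: pindicator_def)
    then show "m \<in> (\<lambda>s. a \<union> s) ` Pow (b - a)" by (intro image_eqI[of _ _ "m - a"]) auto
  next
    fix m assume "m \<in> (\<lambda>s. a \<union> s) ` Pow (b - a)"
    with True assms show "m \<in> {m \<in> pindicator n a. m \<subseteq> b}" by (auto simp: pindicator_def)
  qed
  moreover have "inj_on (\<lambda>s. a \<union> s) (Pow (b - a))" by (auto simp: inj_on_def)
  moreover have "finite (b - a)" using assms finite_Vars finite_subset by blast
  ultimately have "card {m \<in> pindicator n a. m \<subseteq> b} = 2 ^ card (b - a)"
    by (simp add: card_image card_Pow)
  moreover have "card (b - a) = 0 \<longleftrightarrow> a = b" using \<open>finite (b - a)\<close> True by auto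
  ultimately show ?thesis unfolding peval_def by auto
next
  case False
  then have "{m \<in> pindicator n a. m \<subseteq> b} = {}" by (auto simp: pindicator_def)
  then have "card {m \<in> pindicator n a. m \<subseteq> b} = 0" by (metis card.empty)
  with False show ?thesis unfolding peval_def by auto
qed

definition zero_set :: "nat \<Rightarrow> bpoly set \<Rightarrow> var set set" where
  "zero_set n G = {a. a \<subseteq> Vars n \<and> (\<forall>g\<in>G. \<not> peval g a)}"

lemma ex_bideal_indicator:
  assumes G: "G \<subseteq> BPolys n" and "finite P" "P \<subseteq> Pow (Vars n) - zero_set n G"
  shows "\<exists>h\<in>bideal n G. \<forall>b. b \<subseteq> Vars n \<longrightarrow> peval h b \<longleftrightarrow> b \<in> P"
  using assms(2,3)
proof (induction P)
  case empty
  show ?case using peval_pzero bideal.zero by blast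
next
  case (insert a P)
  then obtain h where h: "h \<in> bideal n G" "\<forall>b. b \<subseteq> Vars n \<longrightarrow> peval h b \<longleftrightarrow> b \<in> P"
    by auto
  have "a \<subseteq> Vars n" "a \<notin> zero_set n G" using insert.prems by auto
  then obtain g where g: "g \<in> G" "peval g a" unfolding zero_set_def by auto
  let ?k = "pmul (pindicator n a) g"
  have "?k \<in> bideal n G" using g(1) by (intro bideal.mul pindicator_BPolys bideal.gen)
  with h(1) have "padd h ?k \<in> bideal n G" by (rule bideal.add)
  have fin: "finite g" "finite (pindicator n a)" "finite h"
    using g(1) G h(1) bideal_subset_BPolys[OF G] pindicator_BPolys[of n a]
    by (auto intro: finite_BPolys)
  then have "peval (padd h ?k) b \<longleftrightarrow> b \<in> insert a P" if "b \<subseteq> Vars n" for b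
    using that h(2) g(2) insert.hyps(2)
    by (auto simp: peval_padd peval_pmul peval_pindicator)
  with \<open>padd h ?k \<in> bideal n G\<close> show ?case by blast
qed

lemma in_bideal_if_vanishes_on_zero_set:
  assumes G: "G \<subseteq> BPolys n" and p: "p \<in> BPolys n"
    and vanish: "\<forall>a\<in>zero_set n G. \<not> peval p a"
  shows "p \<in> bideal n G"
proof -
  let ?P = "{a. a \<subseteq> Vars n \<and> peval p a}"
  have fin: "finite ?P" using finite_Vars by (simp add: finite_subset[of _ "Pow (Vars n)"] subset_eq)
  have sub: "?P \<subseteq> Pow (Vars n) - zero_set n G" using vanish by (auto simp: zero_set_def)
  obtain h where h: "h \<in> bideal n G" "\<forall>b. b \<subseteq> Vars n \<longrightarrow> peval h b \<longleftrightarrow> b \<in> ?P"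
    using ex_bideal_indicator[OF G fin sub] by blast
  have "h \<in> BPolys n" using h(1) bideal_subset_BPolys[OF G] by blast
  have "h = p"
  proof (rule poly_eqI_peval)
    show "h \<subseteq> Pow (Vars n)" "finite h"
      using \<open>h \<in> BPolys n\<close> by (simp_all add: BPolys_def finite_BPolys)
    show "p \<subseteq> Pow (Vars n)" "finite p" using p by (simp_all add: BPolys_def finite_BPolys)
  next
    fix b assume "b \<subseteq> Vars n"
    with h(2) show "peval h b \<longleftrightarrow> peval p b" by simp
  qed
  with h(1) show ?thesis by simp
qed

section \<open>Standard monomials and the zero set\<close>

lemma SM_combination_in_ideal_eq_pzero:
  assumes "p \<subseteq> SM n I" "p \<in> I"
  shows "p = pzero"
proof (rule ccontr)
  assume "p \<noteq> pzero"
  have "p \<subseteq> Pow (Vars n)" using assms(1) by (auto simp: SM_def)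
  moreover from this have "finite p" using finite_Vars by (meson finite_Pow_iff finite_subset)
  moreover have "p \<noteq> {}" using \<open>p \<noteq> pzero\<close> by (simp add: pzero_def)
  ultimately have "LM n p \<in> SM n I" using assms(1) LM_mem by blast
  moreover have "{LM n p} \<in> bideal n {{LM n f} | f. f \<in> I \<and> f \<noteq> pzero}"
    using assms(2) \<open>p \<noteq> pzero\<close> by (intro bideal.gen) auto
  ultimately show False by (simp add: SM_def)
qed

lemma card_SM_le_card_zero_set:
  assumes G: "G \<subseteq> BPolys n"
  shows "card (SM n (bideal n G)) \<le> card (zero_set n G)"
proof -
  let ?S = "SM n (bideal n G)" and ?V = "zero_set n G"
  have "?S \<subseteq> Pow (Vars n)" "?V \<subseteq> Pow (Vars n)" by (auto simp: SM_def zero_set_def)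
  then have fin: "finite ?S" "finite ?V" using finite_Vars by (auto intro: finite_subset)
  \<comment> \<open>Two sums of standard monomials agreeing on V differ by an element of the ideal.\<close>
  have "inj_on (\<lambda>p. {a \<in> ?V. peval p a}) (Pow ?S)"
  proof (rule inj_onI)
    fix p q assume pq: "p \<in> Pow ?S" "q \<in> Pow ?S" "{a \<in> ?V. peval p a} = {a \<in> ?V. peval q a}"
    have "finite p" "finite q" using pq(1,2) fin(1) finite_subset by auto
    have "padd p q \<subseteq> ?S" using pq(1,2) by (auto simp: padd_def)
    then have "padd p q \<in> BPolys n" by (auto simp: SM_def BPolys_def)
    moreover have "\<forall>a\<in>?V. \<not> peval (padd p q) a"
      using pq(3) \<open>finite p\<close> \<open>finite q\<close> by (auto simp: peval_padd)
    ultimately have "padd p q \<in> bideal n G" by (rule in_bideal_if_vanishes_on_zero_set[OF G])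
    with \<open>padd p q \<subseteq> ?S\<close> have "padd p q = pzero" by (rule SM_combination_in_ideal_eq_pzero)
    then show "p = q" by (auto simp: padd_def pzero_def)
  qed
  then have "card (Pow ?S) \<le> card (Pow ?V)"
    by (rule card_inj_on_le) (use fin in auto)
  then have "(2::nat) ^ card ?S \<le> 2 ^ card ?V" using fin by (simp add: card_Pow)
  then show ?thesis by simp
qed

section \<open>The zero set of the quorum ideal\<close>

definition point_coords :: "nat \<Rightarrow> var set \<Rightarrow> nat set \<times> nat set" where
  "point_coords n a = ({i \<in> {1..n}. X i \<in> a}, {i \<in> {1..n}. Y i \<in> a})"

lemma inj_on_point_coords: "inj_on (point_coords n) (Pow (Vars n))"
proof (rule inj_onI)
  fix a b assume ab: "a \<in> Pow (Vars n)" "b \<in> Pow (Vars n)" "point_coords n a = point_coords n b"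
  have "X i \<in> a \<longleftrightarrow> X i \<in> b" if "i \<in> {1..n}" for i
    using arg_cong[OF ab(3), of "\<lambda>z. i \<in> fst z"] that by (simp add: point_coords_def)
  moreover have "Y i \<in> a \<longleftrightarrow> Y i \<in> b" if "i \<in> {1..n}" for i
    using arg_cong[OF ab(3), of "\<lambda>z. i \<in> snd z"] that by (simp add: point_coords_def)
  ultimately have "v \<in> a \<longleftrightarrow> v \<in> b" if "v \<in> Vars n" for v
    using that by (auto simp: Vars_def)
  with ab(1,2) show "a = b" by blast
qed

lemma point_coords_zero_set_subset:
  assumes "Q \<subseteq> Pow {1..n}"
  shows "point_coords n ` zero_set n {xi_sys n Q X, xi_sys n Q Y, sigma n}
    \<subseteq> {(A, B). A \<in> Q \<and> B \<in> Q \<and> A \<inter> B \<noteq> {}}"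
proof
  fix z assume "z \<in> point_coords n ` zero_set n {xi_sys n Q X, xi_sys n Q Y, sigma n}"
  then obtain a where a: "a \<in> zero_set n {xi_sys n Q X, xi_sys n Q Y, sigma n}"
    and z: "z = point_coords n a" by blast
  have "finite Q" using assms by (rule finite_subset) simp
  from a have "\<not> peval (xi_sys n Q X) a" "\<not> peval (xi_sys n Q Y) a" "\<not> peval (sigma n) a"
    by (simp_all add: zero_set_def)
  with \<open>finite Q\<close> obtain A B i where A: "A \<in> Q" "\<forall>i\<in>{1..n}. X i \<in> a \<longleftrightarrow> i \<in> A"
    and B: "B \<in> Q" "\<forall>i\<in>{1..n}. Y i \<in> a \<longleftrightarrow> i \<in> B"
    and i: "i \<in> {1..n}" "X i \<in> a" "Y i \<in> a"
    by (auto simp: peval_xi_sys peval_sigma)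
  have "A \<subseteq> {1..n}" "B \<subseteq> {1..n}" using assms A(1) B(1) by auto
  with A(2) B(2) have "z = (A, B)" unfolding z point_coords_def by auto
  with A(1) B(1) i A(2) B(2) show "z \<in> {(A, B). A \<in> Q \<and> B \<in> Q \<and> A \<inter> B \<noteq> {}}" by auto
qed

lemma card_zero_set_le_intersecting_pairs:
  assumes "Q \<subseteq> Pow {1..n}"
  shows "card (zero_set n {xi_sys n Q X, xi_sys n Q Y, sigma n})
    \<le> card {(A, B). A \<in> Q \<and> B \<in> Q \<and> A \<inter> B \<noteq> {}}"
proof (rule card_inj_on_le)
  show "inj_on (point_coords n) (zero_set n {xi_sys n Q X, xi_sys n Q Y, sigma n})"
    by (rule inj_on_subset[OF inj_on_point_coords]) (auto simp: zero_set_def)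
  have "finite Q" using assms by (rule finite_subset) simp
  then have "finite (Q \<times> Q)" by simp
  then show "finite {(A, B). A \<in> Q \<and> B \<in> Q \<and> A \<inter> B \<noteq> {}}"
    by (rule rev_finite_subset) auto
qed (rule point_coords_zero_set_subset[OF assms])

theorem mainTheorem1:
  fixes n :: nat and Q F :: "nat set set" and G :: "bpoly set"
  assumes "Q \<subseteq> Pow {1..n}"
    and "fail_prone n F"
    and "is_groebner_basis n G (bideal n {xi_sys n Q X, xi_sys n Q Y, sigma n})"
    and "card (SM n (bideal n {xi_sys n Q X, xi_sys n Q Y, sigma n})) = (card Q)^2"
  shows "\<forall>Q1 \<in> Q. \<forall>Q2 \<in> Q. Q1 \<inter> Q2 \<noteq> {}"
proof (intro ballI notI)
  fix Q1 Q2 assume Q12: "Q1 \<in> Q" "Q2 \<in> Q" "Q1 \<inter> Q2 = {}"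
  let ?gens = "{xi_sys n Q X, xi_sys n Q Y, sigma n}"
  let ?T = "{(A, B). A \<in> Q \<and> B \<in> Q \<and> A \<inter> B \<noteq> {}}"
  have "finite Q" using assms(1) by (rule finite_subset) simp
  moreover have "X ` {1..n} \<subseteq> Vars n" "Y ` {1..n} \<subseteq> Vars n" by (auto simp: Vars_def)
  ultimately have "?gens \<subseteq> BPolys n" by (simp add: xi_sys_BPolys sigma_BPolys)
  then have "(card Q)^2 \<le> card (zero_set n ?gens)"
    using card_SM_le_card_zero_set assms(4) by metis
  also have "\<dots> \<le> card ?T" by (rule card_zero_set_le_intersecting_pairs[OF assms(1)])
  also have "\<dots> < card (Q \<times> Q)"
  proof (rule psubset_card_mono)
    show "finite (Q \<times> Q)" using \<open>finite Q\<close> by simp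
    have "(Q1, Q2) \<in> Q \<times> Q - ?T" using Q12 by simp
    then show "?T \<subset> Q \<times> Q" by blast
  qed
  finally show False by (simp add: card_cartesian_product power2_eq_square)
qed

end
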